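(* For $\lambda \in \mathbb{R}$, let $\mu_\lambda$ be the exponentially tilted Sato--Tate measure \[ \mu_\lambda(d\theta) = \frac{1}{Z(\lambda)} \sin^2\theta\, e^{\lambda\cos\theta}\, d\theta \quad \text{on } [0,\pi], \] with $Z(\lambda)$ the normalizing constant. Then $\operatorname{Cov}_{\mu_\lambda}(\cos\theta, \cos 2\theta)$ is strictly positive for all $\lambda > 0$ and strictly negative for all $\lambda < 0$. Equivalently, under the tilted semicircle measure $\mu_\lambda(dx) \propto \sqrt{1-x^2}\, e^{\lambda x}\,dx$ on $[-1,1]$, the function $\lambda \mapsto \mathbb{E}_\lambda[x^2]$ is strictly increasing in $\lambda$. *)

theory Defs
  imports "HOL-Analysis.Analysis"
begin

definition st_weight :: "real \<Rightarrow> real \<Rightarrow> real" where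
  "st_weight l \<theta> = (sin \<theta>)\<^sup>2 * exp (l * cos \<theta>)"

definition st_Z :: "real \<Rightarrow> real" where
  "st_Z l = integral {0..pi} (st_weight l)"

definition st_E :: "real \<Rightarrow> (real \<Rightarrow> real) \<Rightarrow> real" where
  "st_E l f = integral {0..pi} (\<lambda>\<theta>. f \<theta> * st_weight l \<theta>) / st_Z l"

definition st_Cov :: "real \<Rightarrow> (real \<Rightarrow> real) \<Rightarrow> (real \<Rightarrow> real) \<Rightarrow> real" where
  "st_Cov l f g = st_E l (\<lambda>\<theta>. f \<theta> * g \<theta>) - st_E l f * st_E l g"

end

theory Submission
  imports Defs
begin

(*
  Write M_k for the integral of cos^k against e^(l cos) sin^2 over [0, pi]. Splitting
  e^(l cos) = cosh (l cos) + sinh (l cos) and using the symmetry theta -> pi - theta, which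
  flips the sign of cos, M_k is the cosh-moment A_k for even k and the sinh-moment B_k for
  odd k, and Cov (cos, cos 2 theta) = 2 (A_0 B_3 - B_1 A_2) / A_0^2.

  For l > 0 put s^2 = A_2 / A_0. The integrand
    (cos^2 - s^2) (cos sinh (l cos) - s tanh (l s) cosh (l cos)) sin^2
  is nonnegative, because t tanh (l t) is an even function increasing in |t|, so both factors
  change sign exactly at |cos| = s; its integral is B_3 - s^2 B_1, the cosh-terms cancelling
  by the choice of s. Hence A_0 B_3 > B_1 A_2. The case l < 0 follows since A_k is even and
  B_k is odd in l.
*)

lemma integral_pos_if_nonneg_continuous:
  fixes f :: "real \<Rightarrow> real"
  assumes "continuous_on {a..b} f" and "a < b"
    and "\<And>x. x \<in> {a..b} \<Longrightarrow> 0 \<le> f x"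
    and "x\<^sub>0 \<in> {a..b}" and "f x\<^sub>0 \<noteq> 0"
  shows "0 < integral {a..b} f"
proof -
  have "0 \<le> integral {a..b} f"
    using assms by (intro integral_nonneg integrable_continuous_real) auto
  moreover have "integral {a..b} f \<noteq> 0"
    using integral_eq_0_iff[of a b f] assms by auto
  ultimately show ?thesis by simp
qed

lemma integral_reflect_interval_real:
  fixes f :: "real \<Rightarrow> 'b::real_normed_vector"
  shows "integral {a..b} (\<lambda>x. f (a + b - x)) = integral {a..b} f"
proof -
  have "integral {a..b} (\<lambda>x. f (a + b - x)) = integral {-b..-a} (\<lambda>x. f (- x))"
    using integral_shift_real_ivl[where f = "\<lambda>x. f (- x)" and a = "-b" and b = "-a" and c = "-a-b"]
    by (simp add: algebra_simps)
  then show ?thesis by simp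
qed

lemma integral_eq_0_if_antisymmetric:
  fixes f :: "real \<Rightarrow> 'b::real_normed_vector"
  assumes "\<And>x. f (a + b - x) = - f x"
  shows "integral {a..b} f = 0"
proof -
  have "- integral {a..b} f = integral {a..b} f"
    using integral_reflect_interval_real[where f = f and a = a and b = b]
    by (simp add: assms integral_neg)
  then have "(2::real) *\<^sub>R integral {a..b} f = 0"
    by (metis scaleR_2 add.right_inverse)
  then show ?thesis by simp
qed

lemma mono_on_similarly_ordered:
  fixes f g :: "'a::linorder \<Rightarrow> 'b::linordered_idom"
  assumes "mono_on S f" "mono_on S g" "x \<in> S" "y \<in> S"
  shows "0 \<le> (f x - f y) * (g x - g y)"
proof (cases "x \<le> y")
  case True
  then show ?thesis
    using assms mono_onD[of S f x y] mono_onD[of S g x y] by (simp add: mult_nonpos_nonpos)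
next
  case False
  then show ?thesis
    using assms mono_onD[of S f y x] mono_onD[of S g y x] by simp
qed

lemma mono_on_mult_tanh:
  fixes l :: real
  assumes "0 \<le> l"
  shows "mono_on {0..} (\<lambda>u. u * tanh (l * u))"
  by (rule mono_onI) (use assms in \<open>auto intro!: mult_mono mult_left_mono\<close>)

lemma square_diff_mult_tanh_diff_nonneg:
  fixes l s t :: real
  assumes "0 \<le> l" and "0 \<le> s"
  shows "0 \<le> (t\<^sup>2 - s\<^sup>2) * (t * tanh (l * t) - s * tanh (l * s))"
proof -
  have "mono_on {0..} (\<lambda>u::real. u\<^sup>2)"
    by (rule mono_onI) (auto intro: power_mono)
  from mono_on_similarly_ordered[OF this mono_on_mult_tanh[OF assms(1)], of "\<bar>t\<bar>" s]
  have "0 \<le> (\<bar>t\<bar>\<^sup>2 - s\<^sup>2) * (\<bar>t\<bar> * tanh (l * \<bar>t\<bar>) - s * tanh (l * s))"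
    using assms(2) by simp
  moreover have "\<bar>t\<bar> * tanh (l * \<bar>t\<bar>) = t * tanh (l * t)"
    by (cases "0 \<le> t") auto
  ultimately show ?thesis by simp
qed

definition st_moment :: "real \<Rightarrow> nat \<Rightarrow> real" where
  "st_moment l k = integral {0..pi} (\<lambda>\<theta>. cos \<theta> ^ k * st_weight l \<theta>)"

definition cosh_moment :: "real \<Rightarrow> nat \<Rightarrow> real" where
  "cosh_moment l k = integral {0..pi} (\<lambda>\<theta>. cos \<theta> ^ k * cosh (l * cos \<theta>) * (sin \<theta>)\<^sup>2)"

definition sinh_moment :: "real \<Rightarrow> nat \<Rightarrow> real" where
  "sinh_moment l k = integral {0..pi} (\<lambda>\<theta>. cos \<theta> ^ k * sinh (l * cos \<theta>) * (sin \<theta>)\<^sup>2)"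

lemma st_moment_integrable:
  "(\<lambda>\<theta>. cos \<theta> ^ k * st_weight l \<theta>) integrable_on {0..pi}"
  unfolding st_weight_def by (intro integrable_continuous_real continuous_intros)

lemma st_moment_eq_cosh_moment_plus_sinh_moment:
  "st_moment l k = cosh_moment l k + sinh_moment l k"
proof -
  have "st_moment l k = integral {0..pi} (\<lambda>\<theta>.
      cos \<theta> ^ k * cosh (l * cos \<theta>) * (sin \<theta>)\<^sup>2 + cos \<theta> ^ k * sinh (l * cos \<theta>) * (sin \<theta>)\<^sup>2)"
    unfolding st_moment_def st_weight_def
    by (simp add: cosh_plus_sinh[symmetric] algebra_simps)
  also have "\<dots> = cosh_moment l k + sinh_moment l k"
    unfolding cosh_moment_def sinh_moment_def
    by (intro integral_add integrable_continuous_real continuous_intros)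
  finally show ?thesis .
qed

lemma cosh_moment_odd: "odd k \<Longrightarrow> cosh_moment l k = 0"
  unfolding cosh_moment_def by (rule integral_eq_0_if_antisymmetric) simp

lemma sinh_moment_even: "even k \<Longrightarrow> sinh_moment l k = 0"
  unfolding sinh_moment_def by (rule integral_eq_0_if_antisymmetric) simp

lemma cosh_moment_uminus: "cosh_moment (- l) k = cosh_moment l k"
  by (simp add: cosh_moment_def)

lemma sinh_moment_uminus: "sinh_moment (- l) k = - sinh_moment l k"
  unfolding sinh_moment_def by (simp flip: integral_neg)

lemma cosh_moment_even_pos: "even k \<Longrightarrow> 0 < cosh_moment l k"
  unfolding cosh_moment_def
  by (rule integral_pos_if_nonneg_continuous[where x\<^sub>0 = "pi / 4"])
    (auto intro!: continuous_intros simp: cos_45 sin_45)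

lemma st_moment_cos_double:
  "integral {0..pi} (\<lambda>\<theta>. cos \<theta> ^ k * cos (2 * \<theta>) * st_weight l \<theta>)
     = 2 * st_moment l (k + 2) - st_moment l k"
proof -
  have "(\<lambda>\<theta>. cos \<theta> ^ k * cos (2 * \<theta>) * st_weight l \<theta>)
      = (\<lambda>\<theta>. 2 * (cos \<theta> ^ (k + 2) * st_weight l \<theta>) - cos \<theta> ^ k * st_weight l \<theta>)"
    unfolding cos_double_cos by (simp add: power_add power2_eq_square algebra_simps)
  moreover have "((\<lambda>\<theta>. 2 * (cos \<theta> ^ (k + 2) * st_weight l \<theta>) - cos \<theta> ^ k * st_weight l \<theta>)
      has_integral 2 * st_moment l (k + 2) - st_moment l k) {0..pi}"
    unfolding st_moment_def
    by (intro has_integral_diff has_integral_mult_right integrable_integral st_moment_integrable)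
  ultimately show ?thesis by (simp only: integral_unique)
qed

lemma st_Cov_cos_cos_double:
  "st_Cov l cos (\<lambda>\<theta>. cos (2 * \<theta>))
     = 2 * (cosh_moment l 0 * sinh_moment l 3 - sinh_moment l 1 * cosh_moment l 2)
         / (cosh_moment l 0)\<^sup>2"
proof -
  have Z: "st_Z l = st_moment l 0"
    by (simp add: st_Z_def st_moment_def)
  have E1: "integral {0..pi} (\<lambda>\<theta>. cos \<theta> * st_weight l \<theta>) = st_moment l 1"
    by (simp add: st_moment_def)
  have E2: "integral {0..pi} (\<lambda>\<theta>. cos (2 * \<theta>) * st_weight l \<theta>) = 2 * st_moment l 2 - st_moment l 0"
    using st_moment_cos_double[of 0 l] by (simp add: eval_nat_numeral)
  have E3: "integral {0..pi} (\<lambda>\<theta>. cos \<theta> * cos (2 * \<theta>) * st_weight l \<theta>)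
      = 2 * st_moment l 3 - st_moment l 1"
    using st_moment_cos_double[of 1 l] by (simp add: eval_nat_numeral)
  have M: "st_moment l 0 = cosh_moment l 0" "st_moment l 1 = sinh_moment l 1"
    "st_moment l 2 = cosh_moment l 2" "st_moment l 3 = sinh_moment l 3"
    by (simp_all add: st_moment_eq_cosh_moment_plus_sinh_moment cosh_moment_odd sinh_moment_even)
  have "cosh_moment l 0 \<noteq> 0"
    using cosh_moment_even_pos[of 0 l] by simp
  then show ?thesis
    unfolding st_Cov_def st_E_def Z E1 E2 E3 M by (simp add: field_simps power2_eq_square)
qed

lemma tanh_witness_integral_pos:
  fixes l s :: real
  assumes "0 < l" and "0 < s"
  shows "0 < integral {0..pi} (\<lambda>\<theta>. ((cos \<theta>)\<^sup>2 - s\<^sup>2)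
      * (cos \<theta> * sinh (l * cos \<theta>) - s * tanh (l * s) * cosh (l * cos \<theta>)) * (sin \<theta>)\<^sup>2)"
proof (rule integral_pos_if_nonneg_continuous[where x\<^sub>0 = "pi / 2"])
  fix \<theta> :: real
  have "sinh (l * cos \<theta>) = tanh (l * cos \<theta>) * cosh (l * cos \<theta>)"
    by (simp add: tanh_def)
  then have eq: "((cos \<theta>)\<^sup>2 - s\<^sup>2) * (cos \<theta> * sinh (l * cos \<theta>) - s * tanh (l * s) * cosh (l * cos \<theta>)) * (sin \<theta>)\<^sup>2
      = ((cos \<theta>)\<^sup>2 - s\<^sup>2) * (cos \<theta> * tanh (l * cos \<theta>) - s * tanh (l * s))
        * (cosh (l * cos \<theta>) * (sin \<theta>)\<^sup>2)"
    by (simp add: algebra_simps)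
  have "0 \<le> ((cos \<theta>)\<^sup>2 - s\<^sup>2) * (cos \<theta> * tanh (l * cos \<theta>) - s * tanh (l * s))"
    using assms by (intro square_diff_mult_tanh_diff_nonneg) auto
  then show "0 \<le> ((cos \<theta>)\<^sup>2 - s\<^sup>2)
      * (cos \<theta> * sinh (l * cos \<theta>) - s * tanh (l * s) * cosh (l * cos \<theta>)) * (sin \<theta>)\<^sup>2"
    unfolding eq by (rule mult_nonneg_nonneg) (auto intro: less_imp_le)
qed (use assms in \<open>auto intro!: continuous_intros\<close>)

lemma sinh_moment_mult_cosh_moment_less:
  assumes "0 < l"
  shows "sinh_moment l 1 * cosh_moment l 2 < cosh_moment l 0 * sinh_moment l 3"
proof -
  have A0: "0 < cosh_moment l 0" and A2: "0 < cosh_moment l 2"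
    by (simp_all add: cosh_moment_even_pos)
  define s where "s = sqrt (cosh_moment l 2 / cosh_moment l 0)"
  have s: "0 < s" "s\<^sup>2 * cosh_moment l 0 = cosh_moment l 2"
    using A0 A2 by (simp_all add: s_def)
  define g where "g = s * tanh (l * s)"
  have "((\<lambda>\<theta>. ((cos \<theta>)\<^sup>2 - s\<^sup>2) * (cos \<theta> * sinh (l * cos \<theta>) - g * cosh (l * cos \<theta>)) * (sin \<theta>)\<^sup>2)
      has_integral sinh_moment l 3 - s\<^sup>2 * sinh_moment l 1
        - g * cosh_moment l 2 + g * (s\<^sup>2 * cosh_moment l 0)) {0..pi}"
  proof -
    have "((cos \<theta>)\<^sup>2 - s\<^sup>2) * (cos \<theta> * sinh (l * cos \<theta>) - g * cosh (l * cos \<theta>)) * (sin \<theta>)\<^sup>2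
        = cos \<theta> ^ 3 * sinh (l * cos \<theta>) * (sin \<theta>)\<^sup>2 - s\<^sup>2 * (cos \<theta> ^ 1 * sinh (l * cos \<theta>) * (sin \<theta>)\<^sup>2)
          - g * (cos \<theta> ^ 2 * cosh (l * cos \<theta>) * (sin \<theta>)\<^sup>2)
          + g * (s\<^sup>2 * (cos \<theta> ^ 0 * cosh (l * cos \<theta>) * (sin \<theta>)\<^sup>2))" for \<theta>
      by (simp add: algebra_simps power2_eq_square power3_eq_cube)
    then show ?thesis
      unfolding cosh_moment_def sinh_moment_def
      by (simp only:) (intro has_integral_add has_integral_diff has_integral_mult_right
          integrable_integral integrable_continuous_real continuous_intros)
  qed
  then have "0 < sinh_moment l 3 - s\<^sup>2 * sinh_moment l 1"
    using tanh_witness_integral_pos[OF assms s(1)] s(2) by (simp add: g_def integral_unique)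
  then have "0 < cosh_moment l 0 * (sinh_moment l 3 - s\<^sup>2 * sinh_moment l 1)"
    using A0 by simp
  also have "\<dots> = cosh_moment l 0 * sinh_moment l 3 - sinh_moment l 1 * cosh_moment l 2"
    by (simp add: s(2)[symmetric] algebra_simps)
  finally show ?thesis by simp
qed

theorem theoremB:
  shows "(\<forall>l::real. l > 0 \<longrightarrow> st_Cov l cos (\<lambda>\<theta>. cos (2 * \<theta>)) > 0) \<and>
         (\<forall>l::real. l < 0 \<longrightarrow> st_Cov l cos (\<lambda>\<theta>. cos (2 * \<theta>)) < 0)"
proof safe
  fix l :: real
  assume "0 < l"
  then show "0 < st_Cov l cos (\<lambda>\<theta>. cos (2 * \<theta>))"
    using sinh_moment_mult_cosh_moment_less[of l] cosh_moment_even_pos[of 0 l]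
    by (simp add: st_Cov_cos_cos_double)
next
  fix l :: real
  assume "l < 0"
  then have "cosh_moment l 0 * sinh_moment l 3 < sinh_moment l 1 * cosh_moment l 2"
    using sinh_moment_mult_cosh_moment_less[of "- l"] by (simp add: cosh_moment_uminus sinh_moment_uminus)
  then show "st_Cov l cos (\<lambda>\<theta>. cos (2 * \<theta>)) < 0"
    using cosh_moment_even_pos[of 0 l] by (simp add: st_Cov_cos_cos_double divide_neg_pos)
qed

end
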